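(* Let $d\ge 2$ and $2\le k\le d+1$, and let $y_1,\dots,y_N\in\{1,\dots,k\}$ be labels with every class appearing at least once. For prototypes $\boldsymbol w_1,\dots,\boldsymbol w_k\in\mathbb S^{d-1}$ and features $\boldsymbol z_1,\dots,\boldsymbol z_N\in\mathbb S^{d-1}$, define $$\gamma_{\min}=\min_{1\le i\le N}\Big(\boldsymbol w_{y_i}^{\mathrm T}\boldsymbol z_i-\max_{j\ne y_i}\boldsymbol w_j^{\mathrm T}\boldsymbol z_i\Big).$$ Then the maximum of $\gamma_{\min}$ over all such configurations is $\frac{k}{k-1}$, and it is attained if and only if $\boldsymbol w_i^{\mathrm T}\boldsymbol w_j=-\frac{1}{k-1}$ for all $i\ne j$ and $\boldsymbol z_i=\boldsymbol w_{y_i}$ for all $i$.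
   Context: $\mathbb S^{d-1}$ is the unit sphere in $\mathbb R^d$. Feature $\boldsymbol z_i$ is associated with label $y_i$; $\gamma_{\min}$ is the minimal sample margin over the dataset. *)

theory Defs
  imports "HOL-Analysis.Analysis"
begin

definition sample_margin :: "nat \<Rightarrow> (nat \<Rightarrow> real ^ 'n) \<Rightarrow> nat \<Rightarrow> real ^ 'n \<Rightarrow> real" where
  "sample_margin k w c zi = w c \<bullet> zi - Max {w j \<bullet> zi | j. j \<in> {1..k} \<and> j \<noteq> c}"

definition gamma_min :: "nat \<Rightarrow> nat \<Rightarrow> (nat \<Rightarrow> nat) \<Rightarrow> (nat \<Rightarrow> real ^ 'n) \<Rightarrow> (nat \<Rightarrow> real ^ 'n) \<Rightarrow> real" where
  "gamma_min k N y w z = Min {sample_margin k w (y i) (z i) | i. i < N}"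

definition admissible :: "nat \<Rightarrow> nat \<Rightarrow> (nat \<Rightarrow> real ^ 'n) \<Rightarrow> (nat \<Rightarrow> real ^ 'n) \<Rightarrow> bool" where
  "admissible k N w z \<longleftrightarrow> (\<forall>j\<in>{1..k}. norm (w j) = 1) \<and> (\<forall>i<N. norm (z i) = 1)"

end

theory Submission
  imports Defs
begin

(* Let S be the sum of the prototypes. The margin of a sample of class c is at most its average
   gap, so (k - 1) gamma_min <= (k w_c - S) . z for every feature z of class c. Choosing one
   feature per class, bounding each term by (|k w_c - S|^2 + k^2) / (2k) and using
   sum_c |k w_c - S|^2 = k^3 - k |S|^2 gives k (k - 1) gamma_min <= k^2 - |S|^2 / 2.
   At equality S = 0, each feature has inner product 1 with its prototype and hence equals it,
   and the gaps w_j . w_c, all bounded by -1/(k-1) and averaging -1/(k-1), are all equal to it.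
   Conversely a regular simplex with k vertices exists in k - 1 dimensions and attains the bound. *)

lemma sum_norm_centered_sq:
  fixes w :: "'i \<Rightarrow> 'a::real_inner" and A :: "'i set"
  defines "n \<equiv> real (card A)"
  shows "(\<Sum>c\<in>A. (norm (n *\<^sub>R w c - sum w A))\<^sup>2)
       = n\<^sup>2 * (\<Sum>c\<in>A. (norm (w c))\<^sup>2) - n * (norm (sum w A))\<^sup>2"
proof -
  let ?S = "sum w A"
  have "(norm (n *\<^sub>R w c - ?S))\<^sup>2 = n\<^sup>2 * (norm (w c))\<^sup>2 - 2 * n * (w c \<bullet> ?S) + (norm ?S)\<^sup>2"
    for c
    unfolding power2_norm_eq_inner
    by (simp add: inner_diff_left inner_diff_right inner_commute power2_eq_square algebra_simps)
  then have "(\<Sum>c\<in>A. (norm (n *\<^sub>R w c - ?S))\<^sup>2)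
      = n\<^sup>2 * (\<Sum>c\<in>A. (norm (w c))\<^sup>2) - 2 * n * (?S \<bullet> ?S) + n * (norm ?S)\<^sup>2"
    by (simp add: sum.distrib sum_subtractf sum_distrib_left inner_sum_left n_def)
  then show ?thesis
    by (simp add: power2_norm_eq_inner)
qed

lemma inner_le_half_sum_sq:
  fixes a z :: "'a::real_inner"
  assumes "norm z = 1"
  shows "2 * t * (a \<bullet> z) \<le> (norm a)\<^sup>2 + t\<^sup>2"
proof -
  have "2 * t * (a \<bullet> z) = (norm a)\<^sup>2 + t\<^sup>2 - (norm (a - t *\<^sub>R z))\<^sup>2"
    using dot_norm_neg[of a "t *\<^sub>R z"] assms by (simp add: power_mult_distrib)
  then show ?thesis
    using zero_le_power2[of "norm (a - t *\<^sub>R z)"] by linarith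
qed

lemma sum_inner_centered_le:
  fixes w z :: "'i \<Rightarrow> 'a::real_inner" and A :: "'i set"
  defines "n \<equiv> real (card A)"
  assumes "\<forall>c\<in>A. norm (w c) = 1" and "\<forall>c\<in>A. norm (z c) = 1"
  shows "(\<Sum>c\<in>A. (n *\<^sub>R w c - sum w A) \<bullet> z c) \<le> n\<^sup>2 - (norm (sum w A))\<^sup>2 / 2"
proof (cases "finite A \<and> A \<noteq> {}")
  case True
  then have n: "n > 0" by (simp add: n_def card_gt_0_iff)
  have "2 * n * (\<Sum>c\<in>A. (n *\<^sub>R w c - sum w A) \<bullet> z c)
      = (\<Sum>c\<in>A. 2 * n * ((n *\<^sub>R w c - sum w A) \<bullet> z c))"
    by (simp add: sum_distrib_left)
  also have "\<dots> \<le> (\<Sum>c\<in>A. (norm (n *\<^sub>R w c - sum w A))\<^sup>2 + n\<^sup>2)"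
    using assms(3) by (intro sum_mono inner_le_half_sum_sq) auto
  also have "\<dots> = n\<^sup>2 * (\<Sum>c\<in>A. (norm (w c))\<^sup>2) - n * (norm (sum w A))\<^sup>2 + n * n\<^sup>2"
    unfolding sum.distrib n_def sum_norm_centered_sq by simp
  also have "\<dots> = n\<^sup>2 * n - n * (norm (sum w A))\<^sup>2 + n * n\<^sup>2"
    using assms(2) by (simp add: n_def)
  also have "\<dots> = 2 * n * (n\<^sup>2 - (norm (sum w A))\<^sup>2 / 2)"
    by (simp add: algebra_simps)
  finally show ?thesis using n by simp
next
  case False
  then show ?thesis by (auto simp: n_def)
qed

lemma sample_margin_ge_iff:
  assumes "2 \<le> k"
  shows "t \<le> sample_margin k w c z \<longleftrightarrow> (\<forall>j\<in>{1..k} - {c}. w j \<bullet> z \<le> w c \<bullet> z - t)"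
proof -
  let ?others = "(\<lambda>j. w j \<bullet> z) ` ({1..k} - {c})"
  have "(if c = 1 then 2 else 1) \<in> {1..k} - {c}"
    using assms by auto
  then have "?others \<noteq> {}"
    by blast
  have others: "{w j \<bullet> z | j. j \<in> {1..k} \<and> j \<noteq> c} = ?others"
    by auto
  have "t \<le> sample_margin k w c z \<longleftrightarrow> Max ?others \<le> w c \<bullet> z - t"
    unfolding sample_margin_def others by linarith
  also have "\<dots> \<longleftrightarrow> (\<forall>j\<in>{1..k} - {c}. w j \<bullet> z \<le> w c \<bullet> z - t)"
    using \<open>?others \<noteq> {}\<close> by simp
  finally show ?thesis .
qed

lemma sample_margin_le_average:
  assumes "2 \<le> k" and c: "c \<in> {1..k}"
  shows "(real k - 1) * sample_margin k w c z \<le> (real k *\<^sub>R w c - (\<Sum>j=1..k. w j)) \<bullet> z"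
proof -
  let ?m = "sample_margin k w c z"
  have "\<forall>j\<in>{1..k} - {c}. w j \<bullet> z \<le> w c \<bullet> z - ?m"
    using sample_margin_ge_iff[OF assms(1), of ?m w c z] by simp
  then have "(\<Sum>j\<in>{1..k} - {c}. w j \<bullet> z) \<le> real (card ({1..k} - {c})) * (w c \<bullet> z - ?m)"
    by (intro sum_bounded_above) auto
  moreover have "card ({1..k} - {c}) = k - 1"
    using c by simp
  moreover have "(\<Sum>j=1..k. w j) \<bullet> z = w c \<bullet> z + (\<Sum>j\<in>{1..k} - {c}. w j \<bullet> z)"
    using c by (simp add: inner_sum_left inner_add_left sum.remove)
  ultimately show ?thesis
    using assms(1) by (simp add: algebra_simps)
qed

lemma gamma_min_le_sample_margin:
  assumes "i < N"
  shows "gamma_min k N y w z \<le> sample_margin k w (y i) (z i)"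
proof -
  have "finite {sample_margin k w (y i) (z i) | i. i < N}"
    by simp
  then show ?thesis
    unfolding gamma_min_def using assms by (auto intro: Min_le)
qed

lemma gamma_min_ge_iff:
  assumes "0 < N"
  shows "t \<le> gamma_min k N y w z \<longleftrightarrow> (\<forall>i<N. t \<le> sample_margin k w (y i) (z i))"
proof -
  have "finite {sample_margin k w (y i) (z i) | i. i < N}"
    by simp
  moreover have "{sample_margin k w (y i) (z i) | i. i < N} \<noteq> {}"
    using assms by auto
  ultimately show ?thesis
    unfolding gamma_min_def by auto
qed

lemma unit_vectors_eq_if_inner_ge_1:
  fixes a b :: "'a::real_inner"
  assumes "norm a = 1" and "norm b = 1" and "1 \<le> a \<bullet> b"
  shows "a = b"
proof -
  have "(norm (a - b))\<^sup>2 = 2 - 2 * (a \<bullet> b)"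
    using dot_norm_neg[of a b] assms(1,2) by simp
  then have "(norm (a - b))\<^sup>2 \<le> 0"
    using assms(3) by simp
  then show ?thesis
    by simp
qed

lemma regular_simplex_from_orthonormal:
  fixes e :: "nat \<Rightarrow> 'a::real_inner"
  assumes m: "1 \<le> m"
    and orthonormal: "\<forall>i\<in>{1..m}. \<forall>j\<in>{1..m}. e i \<bullet> e j = (if i = j then 1 else 0)"
  obtains w :: "nat \<Rightarrow> 'a"
  where "\<forall>i\<in>{1..m+1}. \<forall>j\<in>{1..m+1}. w i \<bullet> w j = (if i = j then 1 else - 1 / real m)"
proof -
  define P where "P = (\<Sum>j=1..m. e j)"
  \<comment> \<open>The Gram conditions for this ansatz reduce to a^2 = 1 + 1/m, m q^2 = 1 and a + m b = q.\<close>
  define a where "a = sqrt (1 + 1 / real m)"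
  define q where "q = sqrt (1 / real m)"
  define b where "b = (q - a) / real m"
  define w where "w c = (if c \<le> m then a *\<^sub>R e c + b *\<^sub>R P else - q *\<^sub>R P)" for c
  have eP: "e i \<bullet> P = 1" if "i \<in> {1..m}" for i
  proof -
    have "e i \<bullet> P = (\<Sum>j=1..m. if i = j then 1 else 0)"
      unfolding P_def inner_sum_right using orthonormal that by (intro sum.cong) auto
    then show ?thesis
      using that by simp
  qed
  have Pe: "P \<bullet> e i = 1" if "i \<in> {1..m}" for i
    using eP[OF that] by (simp add: inner_commute)
  have PP: "P \<bullet> P = real m"
    using eP by (simp add: P_def inner_sum_left)
  have a2: "a\<^sup>2 = 1 + 1 / real m" and q2: "q\<^sup>2 = 1 / real m" and bm: "a + b * real m = q"
    using m by (simp_all add: a_def q_def b_def)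
  have "2 * a * b + b\<^sup>2 * real m = (q\<^sup>2 - a\<^sup>2) / real m"
    using m by (simp add: b_def field_simps power2_eq_square)
  then have cross: "2 * a * b + b\<^sup>2 * real m = - 1 / real m"
    by (simp add: a2 q2)
  have gram: "w i \<bullet> w j = (if i = j then 1 else - 1 / real m)"
    if i: "i \<in> {1..m+1}" and j: "j \<in> {1..m+1}" for i j
  proof (cases "i \<le> m"; cases "j \<le> m")
    assume "i \<le> m" "j \<le> m"
    then have "w i \<bullet> w j = a\<^sup>2 * (e i \<bullet> e j) + (2 * a * b + b\<^sup>2 * real m)"
      using i j eP[of i] Pe[of j] PP
      by (simp add: w_def inner_add_left inner_add_right power2_eq_square algebra_simps)
    then show ?thesis
      using \<open>i \<le> m\<close> \<open>j \<le> m\<close> i j orthonormal by (simp add: a2 cross)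
  next
    assume "i \<le> m" "\<not> j \<le> m"
    then have "w i \<bullet> w j = - q * (a + b * real m)"
      using i eP[of i] PP by (simp add: w_def inner_add_left distrib_left)
    then show ?thesis
      using \<open>i \<le> m\<close> \<open>\<not> j \<le> m\<close> by (simp add: bm q2 flip: power2_eq_square)
  next
    assume "\<not> i \<le> m" "j \<le> m"
    then have "w i \<bullet> w j = - q * (a + b * real m)"
      using j Pe[of j] PP by (simp add: w_def inner_add_right distrib_left)
    then show ?thesis
      using \<open>\<not> i \<le> m\<close> \<open>j \<le> m\<close> by (simp add: bm q2 flip: power2_eq_square)
  next
    assume "\<not> i \<le> m" "\<not> j \<le> m"
    then have "i = j" and "w i \<bullet> w j = q\<^sup>2 * real m"
      using i j PP by (simp_all add: w_def power2_eq_square)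
    then show ?thesis
      using m by (simp add: q2)
  qed
  show ?thesis
    by (rule that[of w]) (simp add: gram)
qed

lemma regular_simplex_exists:
  fixes k :: nat
  assumes "2 \<le> k" and "k \<le> DIM('a) + 1"
  obtains w :: "nat \<Rightarrow> 'a::euclidean_space"
  where "\<forall>i\<in>{1..k}. \<forall>j\<in>{1..k}. w i \<bullet> w j = (if i = j then 1 else - 1 / (real k - 1))"
proof -
  have "card {1..k - 1} \<le> card (Basis :: 'a set)"
    using assms by simp
  then obtain e :: "nat \<Rightarrow> 'a" where e: "inj_on e {1..k - 1}" "e ` {1..k - 1} \<subseteq> Basis"
    by (meson card_le_inj finite_Basis finite_atLeastAtMost)
  have "\<forall>i\<in>{1..k - 1}. \<forall>j\<in>{1..k - 1}. e i \<bullet> e j = (if i = j then 1 else 0)"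
  proof (intro ballI)
    fix i j
    assume "i \<in> {1..k - 1}" and "j \<in> {1..k - 1}"
    then have "e i \<in> Basis" and "e j \<in> Basis" and "e i = e j \<longleftrightarrow> i = j"
      using e by (auto simp: inj_on_eq_iff)
    then show "e i \<bullet> e j = (if i = j then 1 else 0)"
      by (simp add: inner_Basis)
  qed
  moreover have "1 \<le> k - 1" and "k - 1 + 1 = k" and "real (k - 1) = real k - 1"
    using assms by auto
  ultimately show ?thesis
    using regular_simplex_from_orthonormal that by metis
qed

lemma gamma_min_bound_by_prototype_sum:
  fixes w z :: "nat \<Rightarrow> real ^ 'n"
  assumes k2: "2 \<le> k" and allclasses: "\<forall>c\<in>{1..k}. \<exists>i<N. y i = c"
    and adm: "admissible k N w z"
  shows "real k * ((real k - 1) * gamma_min k N y w z) \<le> (real k)\<^sup>2 - (norm (\<Sum>j=1..k. w j))\<^sup>2 / 2"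
proof -
  let ?S = "\<Sum>j=1..k. w j"
  let ?g = "gamma_min k N y w z"
  obtain f where f: "\<forall>c\<in>{1..k}. f c < N \<and> y (f c) = c"
    using allclasses by metis
  have unit: "\<forall>c\<in>{1..k}. norm (w c) = 1" "\<forall>c\<in>{1..k}. norm (z (f c)) = 1"
    using adm f by (auto simp: admissible_def)
  have "real k * ((real k - 1) * ?g) = (\<Sum>c=1..k. (real k - 1) * ?g)"
    by simp
  also have "\<dots> \<le> (\<Sum>c=1..k. (real k - 1) * sample_margin k w c (z (f c)))"
  proof (intro sum_mono mult_left_mono)
    fix c
    assume "c \<in> {1..k}"
    then show "?g \<le> sample_margin k w c (z (f c))"
      using f gamma_min_le_sample_margin[of "f c" N k y w z] by auto
  qed (use k2 in simp)
  also have "\<dots> \<le> (\<Sum>c=1..k. (real k *\<^sub>R w c - ?S) \<bullet> z (f c))"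
    using k2 by (intro sum_mono sample_margin_le_average) auto
  also have "\<dots> \<le> (real k)\<^sup>2 - (norm ?S)\<^sup>2 / 2"
    using sum_inner_centered_le[of "{1..k}" w "z \<circ> f"] unit by simp
  finally show ?thesis .
qed

lemma gamma_min_le_optimum:
  fixes w z :: "nat \<Rightarrow> real ^ 'n"
  assumes "2 \<le> k" and "\<forall>c\<in>{1..k}. \<exists>i<N. y i = c" and "admissible k N w z"
  shows "gamma_min k N y w z \<le> real k / (real k - 1)"
proof -
  have "real k * ((real k - 1) * gamma_min k N y w z) \<le> (real k)\<^sup>2"
    using gamma_min_bound_by_prototype_sum[OF assms] zero_le_power2[of "norm (\<Sum>j=1..k. w j)"]
    by linarith
  then have "(real k - 1) * gamma_min k N y w z \<le> real k"
    using assms(1) by (simp add: power2_eq_square)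
  then show ?thesis
    using assms(1) by (simp add: pos_le_divide_eq mult.commute)
qed

lemma gamma_min_optimal_imp_centered:
  fixes w z :: "nat \<Rightarrow> real ^ 'n"
  assumes "2 \<le> k" and "\<forall>c\<in>{1..k}. \<exists>i<N. y i = c" and "admissible k N w z"
    and "real k / (real k - 1) \<le> gamma_min k N y w z"
  shows "(\<Sum>j=1..k. w j) = 0"
proof -
  have "real k \<le> (real k - 1) * gamma_min k N y w z"
    using assms(1,4) by (simp add: pos_divide_le_eq mult.commute)
  then have "real k * real k \<le> real k * ((real k - 1) * gamma_min k N y w z)"
    by (rule mult_left_mono) simp
  then have "(norm (\<Sum>j=1..k. w j))\<^sup>2 \<le> 0"
    using gamma_min_bound_by_prototype_sum[OF assms(1-3)] by (simp add: power2_eq_square)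
  then show ?thesis
    by simp
qed

lemma gamma_min_optimal_imp_features_eq_prototypes:
  fixes w z :: "nat \<Rightarrow> real ^ 'n"
  assumes k2: "2 \<le> k" and labels: "\<forall>i<N. y i \<in> {1..k}" and adm: "admissible k N w z"
    and centered: "(\<Sum>j=1..k. w j) = 0"
    and optimal: "real k / (real k - 1) \<le> gamma_min k N y w z"
    and i: "i < N"
  shows "z i = w (y i)"
proof -
  have c: "y i \<in> {1..k}"
    using labels i by blast
  have "real k / (real k - 1) \<le> sample_margin k w (y i) (z i)"
    using optimal gamma_min_le_sample_margin[OF i] by (rule order_trans)
  then have "real k \<le> (real k - 1) * sample_margin k w (y i) (z i)"
    using k2 by (simp add: pos_divide_le_eq mult.commute)
  also have "\<dots> \<le> real k * (w (y i) \<bullet> z i)"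
    using sample_margin_le_average[OF k2 c, of w "z i"] centered by simp
  finally have "1 \<le> w (y i) \<bullet> z i"
    using k2 by simp
  moreover have "norm (w (y i)) = 1" and "norm (z i) = 1"
    using adm c i by (auto simp: admissible_def)
  ultimately show ?thesis
    by (metis unit_vectors_eq_if_inner_ge_1 inner_commute)
qed

lemma gamma_min_optimal_imp_simplex:
  fixes w z :: "nat \<Rightarrow> real ^ 'n"
  assumes k2: "2 \<le> k" and allclasses: "\<forall>c\<in>{1..k}. \<exists>i<N. y i = c"
    and adm: "admissible k N w z" and centered: "(\<Sum>j=1..k. w j) = 0"
    and optimal: "real k / (real k - 1) \<le> gamma_min k N y w z"
    and features: "\<forall>i<N. z i = w (y i)"
    and c: "c \<in> {1..k}" and j: "j \<in> {1..k}" "j \<noteq> c"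
  shows "w j \<bullet> w c = - 1 / (real k - 1)"
proof -
  let ?A = "{1..k} - {c}"
  obtain s where s: "s < N" "y s = c"
    using allclasses c by blast
  have wc: "w c \<bullet> w c = 1"
    using adm c by (simp add: admissible_def norm_eq_1)
  have "real k / (real k - 1) \<le> sample_margin k w c (w c)"
    using order_trans[OF optimal gamma_min_le_sample_margin[OF s(1)]] features s by simp
  then have "\<forall>l\<in>?A. w l \<bullet> w c \<le> w c \<bullet> w c - real k / (real k - 1)"
    using sample_margin_ge_iff[OF k2] by blast
  moreover have "1 - real k / (real k - 1) = - 1 / (real k - 1)"
    using k2 by (simp add: field_simps)
  ultimately have le: "\<forall>l\<in>?A. w l \<bullet> w c \<le> - 1 / (real k - 1)"
    using wc by simp
  have "0 = (\<Sum>l=1..k. w l) \<bullet> w c"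
    using centered by simp
  also have "\<dots> = 1 + (\<Sum>l\<in>?A. w l \<bullet> w c)"
    using c wc by (simp add: inner_sum_left inner_add_left sum.remove)
  finally have sum_others: "(\<Sum>l\<in>?A. w l \<bullet> w c) = - 1"
    by simp
  show ?thesis
  proof (rule ccontr)
    assume "w j \<bullet> w c \<noteq> - 1 / (real k - 1)"
    then have "(\<Sum>l\<in>?A. w l \<bullet> w c) < (\<Sum>l\<in>?A. - 1 / (real k - 1))"
      using le j by (intro sum_strict_mono_ex1) (auto intro!: bexI[of _ j] simp: order.strict_iff_order)
    also have "\<dots> = - 1"
      using c k2 by (simp add: of_nat_diff)
    finally show False
      using sum_others by simp
  qed
qed

lemma simplex_imp_gamma_min_optimal:
  fixes w z :: "nat \<Rightarrow> real ^ 'n"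
  assumes k2: "2 \<le> k" and N: "0 < N" and labels: "\<forall>i<N. y i \<in> {1..k}"
    and adm: "admissible k N w z"
    and simplex: "\<forall>i\<in>{1..k}. \<forall>j\<in>{1..k}. i \<noteq> j \<longrightarrow> w i \<bullet> w j = - 1 / (real k - 1)"
    and features: "\<forall>i<N. z i = w (y i)"
  shows "real k / (real k - 1) \<le> gamma_min k N y w z"
  unfolding gamma_min_ge_iff[OF N] sample_margin_ge_iff[OF k2]
proof (intro allI impI ballI)
  fix i l
  assume i: "i < N" and l: "l \<in> {1..k} - {y i}"
  have "w (y i) \<bullet> w (y i) = 1"
    using adm labels i by (simp add: admissible_def norm_eq_1)
  moreover have "1 - real k / (real k - 1) = - 1 / (real k - 1)"
    using k2 by (simp add: field_simps)
  ultimately show "w l \<bullet> z i \<le> w (y i) \<bullet> z i - real k / (real k - 1)"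
    using simplex labels features i l by simp
qed

lemma gamma_min_eq_optimum_iff:
  fixes w z :: "nat \<Rightarrow> real ^ 'n"
  assumes k2: "2 \<le> k" and labels: "\<forall>i<N. y i \<in> {1..k}"
    and allclasses: "\<forall>c\<in>{1..k}. \<exists>i<N. y i = c" and adm: "admissible k N w z"
  shows "gamma_min k N y w z = real k / (real k - 1) \<longleftrightarrow>
       (\<forall>i\<in>{1..k}. \<forall>j\<in>{1..k}. i \<noteq> j \<longrightarrow> w i \<bullet> w j = - 1 / (real k - 1))
       \<and> (\<forall>i<N. z i = w (y i))"
proof
  assume optimal: "gamma_min k N y w z = real k / (real k - 1)"
  have centered: "(\<Sum>j=1..k. w j) = 0"
    using gamma_min_optimal_imp_centered[OF k2 allclasses adm] optimal by simp
  have features: "\<forall>i<N. z i = w (y i)"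
    using gamma_min_optimal_imp_features_eq_prototypes[OF k2 labels adm centered] optimal by simp
  show "(\<forall>i\<in>{1..k}. \<forall>j\<in>{1..k}. i \<noteq> j \<longrightarrow> w i \<bullet> w j = - 1 / (real k - 1))
      \<and> (\<forall>i<N. z i = w (y i))"
    using gamma_min_optimal_imp_simplex[OF k2 allclasses adm centered _ features] optimal features
    by simp
next
  assume "(\<forall>i\<in>{1..k}. \<forall>j\<in>{1..k}. i \<noteq> j \<longrightarrow> w i \<bullet> w j = - 1 / (real k - 1))
      \<and> (\<forall>i<N. z i = w (y i))"
  moreover have "0 < N"
    using allclasses k2 by fastforce
  ultimately show "gamma_min k N y w z = real k / (real k - 1)"
    using simplex_imp_gamma_min_optimal[OF k2 _ labels adm] gamma_min_le_optimum[OF k2 allclasses adm]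
    by simp
qed

theorem proposition1:
  fixes k N :: nat and y :: "nat \<Rightarrow> nat"
  assumes d2: "CARD('n::finite) \<ge> 2"
    and k2: "2 \<le> k" and kd: "k \<le> CARD('n) + 1"
    and labels: "\<forall>i<N. y i \<in> {1..k}"
    and allclasses: "\<forall>c\<in>{1..k}. \<exists>i<N. y i = c"
  shows "(\<forall>(w :: nat \<Rightarrow> real ^ 'n) z. admissible k N w z \<longrightarrow>
             gamma_min k N y w z \<le> real k / (real k - 1))
       \<and> (\<exists>(w :: nat \<Rightarrow> real ^ 'n) z. admissible k N w z \<and>
             gamma_min k N y w z = real k / (real k - 1))
       \<and> (\<forall>(w :: nat \<Rightarrow> real ^ 'n) z. admissible k N w z \<longrightarrow>
             (gamma_min k N y w z = real k / (real k - 1) \<longleftrightarrow>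
               (\<forall>i\<in>{1..k}. \<forall>j\<in>{1..k}. i \<noteq> j \<longrightarrow> w i \<bullet> w j = - 1 / (real k - 1))
               \<and> (\<forall>i<N. z i = w (y i))))"
proof -
  obtain w :: "nat \<Rightarrow> real ^ 'n"
    where w: "\<forall>i\<in>{1..k}. \<forall>j\<in>{1..k}. w i \<bullet> w j = (if i = j then 1 else - 1 / (real k - 1))"
    using regular_simplex_exists[where 'a = "real ^ 'n", OF k2] kd by auto
  then have "admissible k N w (w \<circ> y)"
    using labels by (simp add: admissible_def norm_eq_1)
  moreover have "gamma_min k N y w (w \<circ> y) = real k / (real k - 1)"
    using gamma_min_eq_optimum_iff[OF k2 labels allclasses calculation] w by simp
  ultimately show ?thesis
    using gamma_min_le_optimum[OF k2 allclasses] gamma_min_eq_optimum_iff[OF k2 labels allclasses]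
    by blast
qed

end
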